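(* Assume the standing hypotheses described in the context. For any $y\in B(x_0,R)$, \[-f(\|y-x_0\|)\le\|F'(x_0)^{-1}F(y)\|\le f(\|y-x_0\|)+2\|y-x_0\|.\]
   Context: Standing hypotheses: $\mathbb X,\mathbb Y$ are Banach spaces; $B(x,r)$ is the open ball. $R\in\mathbb R$, $C\subseteq\mathbb X$, $F:C\to\mathbb Y$ is continuous and continuously differentiable on $\mathrm{int}(C)$, $x_0\in\mathrm{int}(C)$ with $F'(x_0)$ non-singular, $f:[0,R)\to\mathbb R$ is continuously differentiable, $B(x_0,R)\subseteq C$, $\|F'(x_0)^{-1}[F'(y)-F'(x)]\|\le f'(\|y-x\|+\|x-x_0\|)-f'(\|x-x_0\|)$ for all $x,y\in B(x_0,R)$ with $\|x-x_0\|+\|y-x\|<R$, $\|F'(x_0)^{-1}F(x_0)\|\le f(0)$, and (h1) $f(0)>0$, $f'(0)=-1$; (h2) $f'$ is strictly increasing and convex; (h3) $f(t)<0$ for some $t\in(0,R)$. *)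

theory Defs
  imports "HOL-Analysis.Analysis"
begin

end

theory Submission
  imports Defs
begin

text \<open>
  Along the segment from \<open>x0\<close> to \<open>y\<close>, the derivative of the Taylor remainder
  \<open>F'(x0)\<^sup>-\<^sup>1 [F(x0 + s(y - x0)) - F(x0) - s F'(x0)(y - x0)]\<close> is bounded, via the majorant
  condition at the centre, by the derivative of the scalar remainder
  \<open>f(st) - f(0) - f'(0) st\<close>, with \<open>t = \<parallel>y - x0\<parallel>\<close>.  Integrating over \<open>s \<in> [0,1]\<close> bounds the
  linearisation error of \<open>F\<close> by \<open>f(t) - f(0) + t\<close>, and both inequalities follow from the
  triangle inequality together with \<open>\<parallel>F'(x0)\<^sup>-\<^sup>1 F(x0)\<parallel> \<le> f(0)\<close>.
\<close>

lemma norm_diff_le_of_vector_derivative_bound: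
  fixes h :: "real \<Rightarrow> 'a::banach" and g :: "real \<Rightarrow> real"
  assumes "a \<le> b"
    and h: "\<And>s. s \<in> {a..b} \<Longrightarrow> (h has_vector_derivative h' s) (at s within {a..b})"
    and g: "\<And>s. s \<in> {a..b} \<Longrightarrow> (g has_vector_derivative g' s) (at s within {a..b})"
    and bound: "\<And>s. s \<in> {a..b} \<Longrightarrow> norm (h' s) \<le> g' s"
  shows "norm (h b - h a) \<le> g b - g a"
proof -
  have h_int: "(h' has_integral (h b - h a)) {a..b}"
    using assms(1) h by (rule fundamental_theorem_of_calculus)
  have g_int: "(g' has_integral (g b - g a)) {a..b}"
    using assms(1) g by (rule fundamental_theorem_of_calculus)
  show ?thesis
    using integral_norm_bound_integral[OF has_integral_integrable[OF h_int]
        has_integral_integrable[OF g_int] bound]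
    by (simp add: integral_unique[OF h_int] integral_unique[OF g_int])
qed

lemma linearization_error_le_majorant:
  fixes F :: "'a::real_normed_vector \<Rightarrow> 'b::real_normed_vector"
    and F' :: "'a \<Rightarrow> ('a \<Rightarrow>\<^sub>L 'b)"
    and L :: "'b \<Rightarrow>\<^sub>L 'c::banach"
    and f f' :: "real \<Rightarrow> real"
  assumes F_deriv: "\<And>x. x \<in> ball x0 R \<Longrightarrow> (F has_derivative blinfun_apply (F' x)) (at x)"
    and f_deriv: "\<And>t. t \<in> {0..<R} \<Longrightarrow> (f has_real_derivative f' t) (at t within {0..<R})"
    and majorant: "\<And>x. x \<in> ball x0 R \<Longrightarrow>
        norm (L o\<^sub>L (F' x - F' x0)) \<le> f' (norm (x - x0)) - f' 0"
    and y_in: "y \<in> ball x0 R"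
  shows "norm (L (F y - F x0 - F' x0 (y - x0)))
         \<le> f (norm (y - x0)) - f 0 - f' 0 * norm (y - x0)"
proof -
  define d where "d = y - x0"
  define t where "t = norm d"
  have "t < R"
    using y_in by (simp add: t_def d_def dist_norm norm_minus_commute)
  have scaled_le: "s * t \<le> t" if "s \<in> {0..1}" for s
    using that by (simp add: t_def mult_left_le_one_le)
  have on_segment: "x0 + s *\<^sub>R d \<in> ball x0 R" if "s \<in> {0..1}" for s
    using that scaled_le[OF that] \<open>t < R\<close> by (simp add: dist_norm t_def)
  have scaled_in: "s * t \<in> {0..<R}" if "s \<in> {0..1}" for s
    using that scaled_le[OF that] \<open>t < R\<close> by (simp add: t_def)

  define h where "h s = L (F (x0 + s *\<^sub>R d) - s *\<^sub>R F' x0 d)" for s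
  define h' where "h' s = L ((F' (x0 + s *\<^sub>R d) - F' x0) d)" for s
  have h_deriv: "(h has_vector_derivative h' s) (at s within {0..1})"
    if s: "s \<in> {0..1}" for s
  proof -
    have "((\<lambda>s. x0 + s *\<^sub>R d) has_derivative (\<lambda>u. u *\<^sub>R d)) (at s within {0..1})"
      by (auto intro!: derivative_eq_intros)
    from has_derivative_compose[OF this F_deriv[OF on_segment[OF s]]]
    have "((\<lambda>s. F (x0 + s *\<^sub>R d)) has_derivative (\<lambda>u. u *\<^sub>R F' (x0 + s *\<^sub>R d) d))
        (at s within {0..1})"
      by (simp add: blinfun.scaleR_right)
    then have "(h has_derivative (\<lambda>u. L (u *\<^sub>R F' (x0 + s *\<^sub>R d) d - u *\<^sub>R F' x0 d)))
        (at s within {0..1})"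
      unfolding h_def by (auto intro!: derivative_eq_intros)
    moreover have "(\<lambda>u. L (u *\<^sub>R F' (x0 + s *\<^sub>R d) d - u *\<^sub>R F' x0 d)) = (\<lambda>u. u *\<^sub>R h' s)"
      by (simp add: fun_eq_iff h'_def blinfun.diff_left blinfun.diff_right
          blinfun.scaleR_right algebra_simps)
    ultimately show ?thesis
      by (simp add: has_vector_derivative_def)
  qed

  define g where "g s = f (s * t) - s * t * f' 0" for s
  define g' where "g' s = t * (f' (s * t) - f' 0)" for s
  have g_deriv: "(g has_vector_derivative g' s) (at s within {0..1})"
    if s: "s \<in> {0..1}" for s
  proof -
    have image: "(\<lambda>s. s * t) ` {0..1} \<subseteq> {0..<R}"
      using scaled_in by blast
    have f_deriv_on_image:
      "(f has_field_derivative f' (s * t)) (at (s * t) within (\<lambda>s. s * t) ` {0..1})"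
      using DERIV_subset[OF f_deriv[OF scaled_in[OF s]] image] .
    have "((\<lambda>s. s * t) has_field_derivative t) (at s within {0..1})"
      by (auto intro!: derivative_eq_intros)
    from DERIV_image_chain[OF f_deriv_on_image this]
    have "((\<lambda>s. f (s * t)) has_field_derivative f' (s * t) * t) (at s within {0..1})"
      by (simp add: o_def)
    then have "(g has_field_derivative f' (s * t) * t - t * f' 0) (at s within {0..1})"
      unfolding g_def by (auto intro!: derivative_eq_intros)
    then show ?thesis
      by (simp add: has_real_derivative_iff_has_vector_derivative[symmetric] g'_def
          algebra_simps)
  qed

  have derivative_bound: "norm (h' s) \<le> g' s" if s: "s \<in> {0..1}" for s
  proof -
    have "norm (h' s) \<le> norm (L o\<^sub>L (F' (x0 + s *\<^sub>R d) - F' x0)) * t"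
      by (metis h'_def norm_blinfun t_def blinfun_apply_blinfun_compose)
    also have "\<dots> \<le> (f' (s * t) - f' 0) * t"
      using majorant[OF on_segment[OF s]] s by (simp add: t_def mult_right_mono)
    finally show ?thesis
      by (simp add: g'_def mult.commute)
  qed

  have "norm (h 1 - h 0) \<le> g 1 - g 0"
    by (rule norm_diff_le_of_vector_derivative_bound) (use h_deriv g_deriv derivative_bound in auto)
  moreover have "h 1 - h 0 = L (F y - F x0 - F' x0 (y - x0))"
    by (simp add: h_def d_def blinfun.diff_right[of L])
  ultimately show ?thesis
    by (simp add: g_def d_def t_def algebra_simps)
qed

lemma norm_bounds_of_remainder:
  fixes u v w :: "'a::real_normed_vector"
  assumes "norm (u - v - w) \<le> e"
  shows "norm u \<le> e + norm v + norm w" and "norm w \<le> norm u + e + norm v"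
proof -
  have "norm u \<le> norm (u - v - w) + norm v + norm w"
    using norm_triangle_ineq[of "u - v - w" "v + w"] norm_triangle_ineq[of v w]
    by (simp add: algebra_simps)
  then show "norm u \<le> e + norm v + norm w"
    using assms by simp
  have "norm w \<le> norm u + norm (u - v - w) + norm v"
    using norm_triangle_ineq4[of "u - v" "u - v - w"] norm_triangle_ineq4[of u v] by simp
  then show "norm w \<le> norm u + e + norm v"
    using assms by simp
qed

theorem corollary3p5:
  fixes F :: "'a::banach \<Rightarrow> 'b::banach"
    and F' :: "'a \<Rightarrow> ('a \<Rightarrow>\<^sub>L 'b)"
    and Finv0 :: "'b \<Rightarrow>\<^sub>L 'a"
    and C :: "'a set" and x0 :: 'a and R :: real
    and f f' :: "real \<Rightarrow> real"
  assumes F_cont: "continuous_on C F"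
    and F_deriv: "\<And>x. x \<in> interior C \<Longrightarrow> (F has_derivative blinfun_apply (F' x)) (at x)"
    and F'_cont: "continuous_on (interior C) F'"
    and x0_int: "x0 \<in> interior C"
    and inv_left: "Finv0 o\<^sub>L F' x0 = id_blinfun"
    and inv_right: "F' x0 o\<^sub>L Finv0 = id_blinfun"
    and f_deriv: "\<And>t. t \<in> {0..<R} \<Longrightarrow> (f has_real_derivative f' t) (at t within {0..<R})"
    and f'_cont: "continuous_on {0..<R} f'"
    and ball_sub: "ball x0 R \<subseteq> C"
    and majorant: "\<And>x y. x \<in> ball x0 R \<Longrightarrow> y \<in> ball x0 R \<Longrightarrow>
        norm (x - x0) + norm (y - x) < R \<Longrightarrow>
        norm (Finv0 o\<^sub>L (F' y - F' x)) \<le> f' (norm (y - x) + norm (x - x0)) - f' (norm (x - x0))"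
    and init: "norm (Finv0 (F x0)) \<le> f 0"
    and h1: "f 0 > 0" "f' 0 = -1"
    and h2: "strict_mono_on {0..<R} f'" "convex_on {0..<R} f'"
    and h3: "\<exists>t\<in>{0<..<R}. f t < 0"
    and y_in: "y \<in> ball x0 R"
  shows "- f (norm (y - x0)) \<le> norm (Finv0 (F y))
         \<and> norm (Finv0 (F y)) \<le> f (norm (y - x0)) + 2 * norm (y - x0)"
proof -
  define t where "t = norm (y - x0)"
  have "ball x0 R \<subseteq> interior C"
    using ball_sub interior_maximal by blast
  moreover have "norm (Finv0 o\<^sub>L (F' x - F' x0)) \<le> f' (norm (x - x0)) - f' 0"
    if "x \<in> ball x0 R" for x
  proof -
    have "x0 \<in> ball x0 R"
      using that by (auto intro: le_less_trans[OF zero_le_dist])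
    then show ?thesis
      using majorant[of x0 x] that by (simp add: dist_norm norm_minus_commute)
  qed
  ultimately have "norm (Finv0 (F y - F x0 - F' x0 (y - x0))) \<le> f t - f 0 + t"
    using linearization_error_le_majorant[OF F_deriv f_deriv _ y_in] h1(2)
    by (force simp: t_def)
  moreover have "Finv0 (F' x0 (y - x0)) = y - x0"
    using arg_cong[OF inv_left, of "\<lambda>L. L (y - x0)"] by simp
  ultimately have "norm (Finv0 (F y) - Finv0 (F x0) - (y - x0)) \<le> f t - f 0 + t"
    by (simp add: blinfun.diff_right[of Finv0])
  from norm_bounds_of_remainder[OF this] show ?thesis
    using init by (simp add: t_def)
qed

end
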